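(* Let $k\geq0$ and $S=sgp^+\langle a,b\mid a^kb=ba\rangle$. Then $S$ is prefix-automatic if and only if $k\leq1$.
   Context: $sgp^+\langle A\mid R\rangle$ is the free semigroup $A^+$ of nonempty words modulo the congruence generated by $R$; $a^0$ is the empty word. Automaticity: regular = accepted by a finite automaton. With $\$\notin A$, $A(2,\$)=(A\cup\{\$\})^2\setminus\{(\$,\$)\}$; $(\alpha,\beta)\delta_A^R$ is the word over $A(2,\$)$ obtained by padding the shorter word on the right with $\$$'s and reading letter pairs. For a semigroup $S$ generated by finite $A$, $\phi:A^+\to S$ canonical, $L\subseteq A^+$ regular with $\phi(L)=S$, write $\alpha=\beta$ if $\phi(\alpha)=\phi(\beta)$ and $L_a^\$=\{(\alpha,\beta)\delta^R_A:\alpha,\beta\in L,\alpha a=\beta\}$ for $a\in A\cup\{\varepsilon\}$. $S$ is automatic if some such $(A,L)$ has all $L_a^\$$ regular; prefix-automatic if some such automatic structure also has $\{(\alpha,\beta)\delta_A^R:\alpha\in L,\beta\in\mathrm{Pref}(L),\alpha=\beta\}$ regular ($\mathrm{Pref}(L)$ = prefixes of words of $L$). *)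

theory Defs
  imports Main
begin

definition regular_on :: "'x set \<Rightarrow> 'x list set \<Rightarrow> bool" where
  "regular_on \<Sigma> L \<longleftrightarrow> finite \<Sigma> \<and> L \<subseteq> lists \<Sigma> \<and>
     (\<exists>(Q::nat set) q0 (\<delta>::nat \<Rightarrow> 'x \<Rightarrow> nat) F.
        finite Q \<and> q0 \<in> Q \<and> (\<forall>q\<in>Q. \<forall>x\<in>\<Sigma>. \<delta> q x \<in> Q) \<and> F \<subseteq> Q \<and>
        L = {w \<in> lists \<Sigma>. foldl \<delta> q0 w \<in> F})"

definition sg_eval :: "('s \<Rightarrow> 's \<Rightarrow> 's) \<Rightarrow> 's list \<Rightarrow> 's" where
  "sg_eval m w = foldl m (hd w) (tl w)"

text \<open>Padding: None plays the role of the padding symbol dollar.\<close>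
definition pad :: "'a list \<Rightarrow> 'a list \<Rightarrow> ('a option \<times> 'a option) list" where
  "pad u v = (let n = max (length u) (length v) in
     zip (map Some u @ replicate (n - length u) None)
         (map Some v @ replicate (n - length v) None))"

definition alphabet2 :: "'a set \<Rightarrow> ('a option \<times> 'a option) set" where
  "alphabet2 A = (insert None (Some ` A)) \<times> (insert None (Some ` A)) - {(None, None)}"

text \<open>L_a^dollar, where the letter a is given as a word of length 0 (epsilon) or 1.\<close>
definition L_dollar :: "('s \<Rightarrow> 's \<Rightarrow> 's) \<Rightarrow> 's list set \<Rightarrow> 's list \<Rightarrow> ('s option \<times> 's option) list set" where
  "L_dollar m L a = {pad \<alpha> \<beta> | \<alpha> \<beta>. \<alpha> \<in> L \<and> \<beta> \<in> L \<and> sg_eval m (\<alpha> @ a) = sg_eval m \<beta>}"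

definition Pref :: "'a list set \<Rightarrow> 'a list set" where
  "Pref L = {\<beta>. \<exists>\<gamma>. \<beta> @ \<gamma> \<in> L}"

definition automatic_structure :: "'s set \<Rightarrow> ('s \<Rightarrow> 's \<Rightarrow> 's) \<Rightarrow> 's set \<Rightarrow> 's list set \<Rightarrow> bool" where
  "automatic_structure C m A L \<longleftrightarrow>
     finite A \<and> A \<subseteq> C \<and> regular_on A L \<and> (\<forall>w\<in>L. w \<noteq> []) \<and> sg_eval m ` L = C \<and>
     (\<forall>a \<in> insert [] ((\<lambda>x. [x]) ` A). regular_on (alphabet2 A) (L_dollar m L a))"

definition automatic_sg :: "'s set \<Rightarrow> ('s \<Rightarrow> 's \<Rightarrow> 's) \<Rightarrow> bool" where
  "automatic_sg C m \<longleftrightarrow> (\<exists>A L. automatic_structure C m A L)"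

definition prefix_automatic_sg :: "'s set \<Rightarrow> ('s \<Rightarrow> 's \<Rightarrow> 's) \<Rightarrow> bool" where
  "prefix_automatic_sg C m \<longleftrightarrow> (\<exists>A L. automatic_structure C m A L \<and>
     regular_on (alphabet2 A)
       {pad \<alpha> \<beta> | \<alpha> \<beta>. \<alpha> \<in> L \<and> \<beta> \<in> Pref L \<and> \<beta> \<noteq> [] \<and> sg_eval m \<alpha> = sg_eval m \<beta>})"

datatype ab = La | Lb

definition rstep :: "nat \<Rightarrow> (ab list \<times> ab list) set" where
  "rstep k = {(u @ replicate k La @ [Lb] @ v, u @ [Lb, La] @ v) | u v. True}"

definition cong_k :: "nat \<Rightarrow> (ab list \<times> ab list) set" where
  "cong_k k = (rstep k \<union> (rstep k)\<inverse>)\<^sup>*"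

definition S_carrier :: "nat \<Rightarrow> ab list set set" where
  "S_carrier k = {w. w \<noteq> []} // cong_k k"

definition S_mult :: "nat \<Rightarrow> ab list set \<Rightarrow> ab list set \<Rightarrow> ab list set" where
  "S_mult k X Y = cong_k k `` {x @ y | x y. x \<in> X \<and> y \<in> Y}"

end

(*
  For k <= 1 the words a^i b^j with i + j > 0 are normal forms of S and form a prefix-closed
  automatic structure: right multiplication by b appends a letter, and right multiplication by a
  turns a^i b^j into a^(i+1) b^j (k = 1), or for j > 0 leaves it unchanged (k = 0); each of these
  padded relations is recognised by a small automaton.

  For k >= 2 there is not even an automatic structure. The defining relation never shortens words,
  so every element has only finitely many representatives, and pumping the automata for right
  multiplication by a and by b shows that representatives of s, s a and s b differ in length by at
  most a constant N. As b^n a = a^K b^n with K = k^n, walking from a^K b^n down to a^K one b at a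
  time yields a representative of a^K of length O(n N); but every generator contributes boundedly
  many a's, so such a representative needs at least K/c letters for a constant c.
*)
theory Submission
  imports Defs
begin

lemma pad_Cons: "pad (x # u) (y # v) = (Some x, Some y) # pad u v"
  by (simp add: pad_def Let_def)

lemma pad_Nil_left: "pad [] v = map (\<lambda>y. (None, Some y)) v"
  by (simp add: pad_def Let_def zip_replicate1)

lemma pad_Nil_right: "pad u [] = map (\<lambda>x. (Some x, None)) u"
  by (simp add: pad_def Let_def zip_replicate2)

lemma pad_append_right:
  "length u = length v \<Longrightarrow> pad u (v @ v') = pad u v @ map (\<lambda>y. (None, Some y)) v'"
proof (induction u arbitrary: v)
  case (Cons x u) then show ?case by (cases v) (auto simp: pad_Cons)
qed (simp add: pad_Nil_left)

lemma pad_append_left: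
  "length u = length v \<Longrightarrow> pad (u @ u') v = pad u v @ map (\<lambda>x. (Some x, None)) u'"
proof (induction u arbitrary: v)
  case (Cons x u) then show ?case by (cases v) (auto simp: pad_Cons)
qed (simp add: pad_Nil_right)

lemma pad_append_same: "pad (w @ u) (w @ v) = map (\<lambda>x. (Some x, Some x)) w @ pad u v"
  by (induction w) (simp_all add: pad_Cons)

lemma pad_same: "pad u u = map (\<lambda>x. (Some x, Some x)) u"
  using pad_append_same[of u "[]" "[]"] by (simp add: pad_Nil_left)

lemma pad_snoc_right: "pad u (u @ [y]) = map (\<lambda>x. (Some x, Some x)) u @ [(None, Some y)]"
  by (simp add: pad_append_right pad_same)

lemma pad_inject: "pad u v = pad u' v' \<Longrightarrow> u = u' \<and> v = v'"
proof -
  have components: "takeWhile (\<lambda>x. x \<noteq> None) (map fst (pad u v)) = map Some u \<and>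
      takeWhile (\<lambda>x. x \<noteq> None) (map snd (pad u v)) = map Some v" for u v :: "'a list"
  proof (induction u arbitrary: v)
    case Nil then show ?case by (cases v) (simp_all add: pad_Nil_left comp_def)
  next
    case (Cons x u) then show ?case
      by (cases v) (auto simp: pad_Cons pad_Nil_right comp_def)
  qed
  show "pad u v = pad u' v' \<Longrightarrow> u = u' \<and> v = v'"
    using components[of u v] components[of u' v'] by simp
qed

section \<open>Regular languages via residuals\<close>

definition residual :: "'x list set \<Rightarrow> 'x list \<Rightarrow> 'x list set" where
  "residual L u = {w. u @ w \<in> L}"

lemma residual_Nil [simp]: "residual L [] = L"
  by (simp add: residual_def)

lemma residual_residual: "residual (residual L u) v = residual L (u @ v)"
  by (simp add: residual_def)

lemma foldl_closed: "q \<in> Q \<Longrightarrow> \<forall>q\<in>Q. \<forall>x\<in>\<Sigma>. \<delta> q x \<in> Q \<Longrightarrow> w \<in> lists \<Sigma> \<Longrightarrow> foldl \<delta> q w \<in> Q"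
  by (induction w arbitrary: q) auto

text \<open>\<open>regular_on\<close> asks for natural-number states; any finite set of states can be renumbered.\<close>
lemma regular_onI:
  fixes \<delta> :: "'q \<Rightarrow> 'x \<Rightarrow> 'q"
  assumes \<Sigma>: "finite \<Sigma>" and Q: "finite Q" "q0 \<in> Q" "\<forall>q\<in>Q. \<forall>x\<in>\<Sigma>. \<delta> q x \<in> Q"
    and L: "L = {w \<in> lists \<Sigma>. foldl \<delta> q0 w \<in> F}"
  shows "regular_on \<Sigma> L"
proof -
  obtain h where h: "bij_betw h Q {0..<card Q}"
    using ex_bij_betw_finite_nat Q(1) by blast
  define \<delta>' where "\<delta>' q x = h (\<delta> (the_inv_into Q h q) x)" for q x
  have inv: "the_inv_into Q h (h q) = q" if "q \<in> Q" for q
    using the_inv_into_f_f[OF bij_betw_imp_inj_on[OF h] that] .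
  have run: "foldl \<delta>' (h q) w = h (foldl \<delta> q w)" if "q \<in> Q" "w \<in> lists \<Sigma>" for q w
    using that by (induction w arbitrary: q) (auto simp: \<delta>'_def inv Q(3))
  have closed: "\<forall>q\<in>{0..<card Q}. \<forall>x\<in>\<Sigma>. \<delta>' q x \<in> {0..<card Q}"
    using h Q(3) unfolding \<delta>'_def bij_betw_def
    by (metis image_eqI order_refl the_inv_into_into)
  have "w \<in> L \<longleftrightarrow> w \<in> lists \<Sigma> \<and> foldl \<delta>' (h q0) w \<in> h ` (F \<inter> Q)" for w
  proof (cases "w \<in> lists \<Sigma>")
    case True
    then have "foldl \<delta> q0 w \<in> Q" using foldl_closed[OF Q(2,3)] by blast
    then have "h (foldl \<delta> q0 w) \<in> h ` (F \<inter> Q) \<longleftrightarrow> foldl \<delta> q0 w \<in> F"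
      using inj_on_image_mem_iff[OF bij_betw_imp_inj_on[OF h]] by blast
    with True show ?thesis using L run[OF Q(2) True] by simp
  qed (use L in blast)
  then have "L = {w \<in> lists \<Sigma>. foldl \<delta>' (h q0) w \<in> h ` (F \<inter> Q)}" by blast
  moreover have "h q0 \<in> {0..<card Q}" "h ` (F \<inter> Q) \<subseteq> {0..<card Q}"
    using bij_betwE[OF h] Q(2) by blast+
  moreover have "L \<subseteq> lists \<Sigma>" using L by blast
  ultimately show ?thesis
    unfolding regular_on_def using \<Sigma> closed by blast
qed

lemma regular_on_finite_residuals:
  assumes "regular_on \<Sigma> L" shows "finite (residual L ` lists \<Sigma>)"
proof -
  obtain Q :: "nat set" and q0 \<delta> F where Q: "finite Q" "q0 \<in> Q" "\<forall>q\<in>Q. \<forall>x\<in>\<Sigma>. \<delta> q x \<in> Q"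
    and L: "L = {w \<in> lists \<Sigma>. foldl \<delta> q0 w \<in> F}"
    using assms unfolding regular_on_def by blast
  have "residual L u = {w \<in> lists \<Sigma>. foldl \<delta> (foldl \<delta> q0 u) w \<in> F}" if "u \<in> lists \<Sigma>" for u
    using that unfolding residual_def L by auto
  then have "residual L ` lists \<Sigma> \<subseteq> (\<lambda>q. {w \<in> lists \<Sigma>. foldl \<delta> q w \<in> F}) ` Q"
    using foldl_closed[OF Q(2,3)] by blast
  then show ?thesis using Q(1) finite_surj by blast
qed

lemma regular_onI_finite_residuals:
  assumes "finite \<Sigma>" and L: "L \<subseteq> lists \<Sigma>" and "finite (residual L ` lists \<Sigma>)"
  shows "regular_on \<Sigma> L"
proof (rule regular_onI)
  let ?\<delta> = "\<lambda>R x. residual R [x]"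
  have run: "foldl ?\<delta> (residual L u) w = residual L (u @ w)" for u w
    by (induction w arbitrary: u) (simp_all add: residual_residual)
  show "\<forall>R\<in>residual L ` lists \<Sigma>. \<forall>x\<in>\<Sigma>. ?\<delta> R x \<in> residual L ` lists \<Sigma>"
    by (auto simp: residual_residual)
  show "L = {w \<in> lists \<Sigma>. foldl ?\<delta> L w \<in> {R. [] \<in> R}}"
    using run[of "[]"] L by (auto simp: residual_def)
  show "L \<in> residual L ` lists \<Sigma>"
    by (rule image_eqI[of _ _ "[]"]) simp_all
qed (use assms in auto)

lemma regular_on_iff_finite_residuals:
  "regular_on \<Sigma> L \<longleftrightarrow> finite \<Sigma> \<and> L \<subseteq> lists \<Sigma> \<and> finite (residual L ` lists \<Sigma>)"
  using regular_on_finite_residuals[of \<Sigma> L] regular_onI_finite_residuals[of \<Sigma> L]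
  by (auto simp: regular_on_def)

lemma regular_on_Un:
  assumes "regular_on \<Sigma> A" and "regular_on \<Sigma> B" shows "regular_on \<Sigma> (A \<union> B)"
proof -
  have "residual (A \<union> B) u = residual A u \<union> residual B u" for u
    by (auto simp: residual_def)
  then have "residual (A \<union> B) ` lists \<Sigma> \<subseteq>
      {X \<union> Y | X Y. X \<in> residual A ` lists \<Sigma> \<and> Y \<in> residual B ` lists \<Sigma>}"
    by blast
  moreover have "finite {X \<union> Y | X Y. X \<in> residual A ` lists \<Sigma> \<and> Y \<in> residual B ` lists \<Sigma>}"
    using assms by (intro finite_image_set2) (simp_all add: regular_on_finite_residuals)
  ultimately show ?thesis
    using assms unfolding regular_on_iff_finite_residuals by (auto intro: finite_subset)
qed

lemma regular_on_Diff:
  assumes "regular_on \<Sigma> A" and "regular_on \<Sigma> B" shows "regular_on \<Sigma> (A - B)"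
proof -
  have "residual (A - B) u = residual A u - residual B u" for u
    by (auto simp: residual_def)
  then have "residual (A - B) ` lists \<Sigma> \<subseteq>
      {X - Y | X Y. X \<in> residual A ` lists \<Sigma> \<and> Y \<in> residual B ` lists \<Sigma>}"
    by blast
  moreover have "finite {X - Y | X Y. X \<in> residual A ` lists \<Sigma> \<and> Y \<in> residual B ` lists \<Sigma>}"
    using assms by (intro finite_image_set2) (simp_all add: regular_on_finite_residuals)
  ultimately show ?thesis
    using assms unfolding regular_on_iff_finite_residuals by (auto intro: finite_subset)
qed

definition conc :: "'x list set \<Rightarrow> 'x list set \<Rightarrow> 'x list set" where
  "conc A B = {u @ v | u v. u \<in> A \<and> v \<in> B}"

lemma residual_conc:
  "residual (conc A B) w = conc (residual A w) B \<union> \<Union> (residual B ` {v. \<exists>u\<in>A. w = u @ v})"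
proof (intro equalityI subsetI)
  fix x assume "x \<in> residual (conc A B) w"
  then obtain u v where uv: "w @ x = u @ v" "u \<in> A" "v \<in> B"
    unfolding residual_def conc_def by blast
  from uv(1) obtain s where "w = u @ s \<and> s @ x = v \<or> w @ s = u \<and> x = s @ v"
    by (auto simp: append_eq_append_conv2)
  then consider "w = u @ s" "x \<in> residual B s" | "s \<in> residual A w" "x = s @ v"
    using uv(2,3) unfolding residual_def by blast
  then show "x \<in> conc (residual A w) B \<union> \<Union> (residual B ` {v. \<exists>u\<in>A. w = u @ v})"
  proof cases
    case 1 then show ?thesis using uv(2) by blast
  next
    case 2 then show ?thesis using uv(3) unfolding conc_def by blast
  qed
next
  fix x assume "x \<in> conc (residual A w) B \<union> \<Union> (residual B ` {v. \<exists>u\<in>A. w = u @ v})"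
  then consider p q where "x = p @ q" "w @ p \<in> A" "q \<in> B"
    | u v where "u \<in> A" "w = u @ v" "v @ x \<in> B"
    unfolding residual_def conc_def by blast
  then show "x \<in> residual (conc A B) w"
  proof cases
    case (1 p q)
    then have "w @ x = (w @ p) @ q" by simp
    with 1 show ?thesis unfolding residual_def conc_def by blast
  next
    case (2 u v)
    then have "w @ x = u @ (v @ x)" by simp
    with 2 show ?thesis unfolding residual_def conc_def by blast
  qed
qed

lemma regular_on_conc:
  assumes "regular_on \<Sigma> A" and "regular_on \<Sigma> B" shows "regular_on \<Sigma> (conc A B)"
proof -
  have "residual (conc A B) ` lists \<Sigma> \<subseteq>
      {conc X B \<union> \<Union> T | X T. X \<in> residual A ` lists \<Sigma> \<and> T \<in> Pow (residual B ` lists \<Sigma>)}"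
  proof
    fix R assume "R \<in> residual (conc A B) ` lists \<Sigma>"
    then obtain w where w: "w \<in> lists \<Sigma>" "R = residual (conc A B) w" by blast
    have "residual B ` {v. \<exists>u\<in>A. w = u @ v} \<in> Pow (residual B ` lists \<Sigma>)"
      using w(1) by auto
    moreover have "R = conc (residual A w) B \<union> \<Union> (residual B ` {v. \<exists>u\<in>A. w = u @ v})"
      using w(2) by (rule trans[OF _ residual_conc])
    ultimately show "R \<in> {conc X B \<union> \<Union> T | X T. X \<in> residual A ` lists \<Sigma> \<and> T \<in> Pow (residual B ` lists \<Sigma>)}"
      using w(1) by blast
  qed
  moreover have "finite {conc X B \<union> \<Union> T | X T. X \<in> residual A ` lists \<Sigma> \<and> T \<in> Pow (residual B ` lists \<Sigma>)}"
    using assms by (intro finite_image_set2) (simp_all add: regular_on_finite_residuals)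
  moreover have "conc A B \<subseteq> lists \<Sigma>"
    using assms unfolding regular_on_def conc_def by auto
  ultimately show ?thesis
    using assms unfolding regular_on_iff_finite_residuals by (auto intro: finite_subset)
qed

lemma regular_on_singleton:
  assumes "finite \<Sigma>" and "w \<in> lists \<Sigma>" shows "regular_on \<Sigma> {w}"
proof -
  have "residual {w} u \<in> insert {} ((\<lambda>n. {drop n w}) ` {..length w})" for u
  proof (cases "\<exists>v. w = u @ v")
    case True
    then have "residual {w} u = {drop (length u) w}" "length u \<le> length w"
      by (auto simp: residual_def)
    then show ?thesis by blast
  qed (auto simp: residual_def)
  then have "residual {w} ` lists \<Sigma> \<subseteq> insert {} ((\<lambda>n. {drop n w}) ` {..length w})"
    by blast
  with assms show ?thesis
    unfolding regular_on_iff_finite_residuals by (auto intro: finite_subset)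
qed

lemma regular_on_lists:
  assumes "finite \<Sigma>" and "S \<subseteq> \<Sigma>" shows "regular_on \<Sigma> (lists S)"
proof -
  have "residual (lists S) u \<in> {lists S, {}}" for u
    by (cases "u \<in> lists S") (auto simp: residual_def)
  then have "residual (lists S) ` lists \<Sigma> \<subseteq> {lists S, {}}"
    by blast
  with assms show ?thesis
    unfolding regular_on_iff_finite_residuals by (auto intro: finite_subset)
qed

lemma residual_pump:
  assumes "residual L (p @ v) = residual L p"
  shows "residual L (p @ concat (replicate n v)) = residual L p"
proof (induction n)
  case (Suc n)
  have "residual L (p @ concat (replicate (Suc n) v)) =
      residual (residual L (p @ v)) (concat (replicate n v))"
    by (simp add: residual_residual)
  also have "\<dots> = residual L p"
    using Suc by (simp add: assms residual_residual)
  finally show ?case .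
qed simp

text \<open>Pigeonhole on the finitely many residuals along the prefixes of \<open>w2\<close>.\<close>
lemma regular_on_residual_loop:
  assumes "regular_on \<Sigma> R" and w: "w1 @ w2 \<in> R" and long: "card (residual R ` lists \<Sigma>) < length w2"
  obtains u v z where "w2 = u @ v @ z" "v \<noteq> []" "residual R (w1 @ u @ v) = residual R (w1 @ u)"
proof -
  define res where "res i = residual R (w1 @ take i w2)" for i
  have "w1 @ w2 \<in> lists \<Sigma>" using w assms(1) unfolding regular_on_def by blast
  then have "w1 @ take i w2 \<in> lists \<Sigma>" for i
    using set_take_subset[of i w2] by auto
  then have "res ` {0..length w2} \<subseteq> residual R ` lists \<Sigma>"
    unfolding res_def by blast
  then have card_le: "card (res ` {0..length w2}) \<le> card (residual R ` lists \<Sigma>)"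
    using regular_on_finite_residuals[OF assms(1)] by (rule card_mono[rotated])
  have "\<not> inj_on res {0..length w2}"
  proof
    assume "inj_on res {0..length w2}"
    then have "card (res ` {0..length w2}) = Suc (length w2)" by (simp add: card_image)
    with card_le long show False by simp
  qed
  then obtain i j where ij: "i < j" "j \<le> length w2" "res i = res j"
    unfolding inj_on_def by (metis atLeastAtMost_iff linorder_neqE_nat)
  have "take i (take j w2) = take i w2" using ij(1) by simp
  then have uv: "take i w2 @ drop i (take j w2) = take j w2"
    using append_take_drop_id[of i "take j w2"] by simp
  show thesis
  proof
    show "w2 = take i w2 @ drop i (take j w2) @ drop j w2"
      using uv by (metis append_assoc append_take_drop_id)
    show "drop i (take j w2) \<noteq> []" using ij by simp
    show "residual R (w1 @ take i w2 @ drop i (take j w2)) = residual R (w1 @ take i w2)"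
      using ij(3) uv unfolding res_def by simp
  qed
qed

lemma regular_on_pumping:
  assumes "regular_on \<Sigma> R"
  obtains N where "\<And>w1 w2 M. w1 @ w2 \<in> R \<Longrightarrow> N < length w2 \<Longrightarrow>
    \<exists>w2'. w1 @ w2' \<in> R \<and> M < length w2' \<and> set w2' \<subseteq> set w2"
proof
  fix w1 w2 M assume w: "w1 @ w2 \<in> R" and long: "card (residual R ` lists \<Sigma>) < length w2"
  obtain u v z where w2: "w2 = u @ v @ z" and "v \<noteq> []"
    and loop: "residual R ((w1 @ u) @ v) = residual R (w1 @ u)"
    using regular_on_residual_loop[OF assms w long] by auto
  define w2' where "w2' = u @ concat (replicate (Suc M) v) @ z"
  have "z \<in> residual R ((w1 @ u) @ v)"
    using w w2 by (simp add: residual_def)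
  then have "z \<in> residual R ((w1 @ u) @ concat (replicate (Suc M) v))"
    using residual_pump[OF loop, of "Suc M"] loop by simp
  then have "w1 @ w2' \<in> R"
    unfolding w2'_def residual_def by simp
  moreover have "1 \<le> length v" using \<open>v \<noteq> []\<close> by (cases v) auto
  then have "Suc M \<le> length (concat (replicate (Suc M) v))"
    using mult_le_mono2[of 1 "length v" "Suc M"] by (simp add: length_concat sum_list_replicate)
  then have "M < length w2'" unfolding w2'_def by simp
  moreover have "set w2' \<subseteq> set w2" unfolding w2'_def w2 by auto
  ultimately show "\<exists>w2'. w1 @ w2' \<in> R \<and> M < length w2' \<and> set w2' \<subseteq> set w2" by blast
qed

definition nf_words :: "'a \<Rightarrow> 'a \<Rightarrow> 'a list set" where
  "nf_words x y = {replicate i x @ replicate j y | i j. i + j \<noteq> 0}"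

lemma lists_singleton_eq_range: "lists {x} = range (\<lambda>i. replicate i x)"
proof (intro equalityI subsetI)
  fix w assume "w \<in> lists {x}"
  then have "w = replicate (length w) x" using replicate_length_same[of w x] by auto
  then show "w \<in> range (\<lambda>i. replicate i x)" by (rule range_eqI)
qed auto

lemma lists_singleton: "w \<in> lists {x} \<longleftrightarrow> (\<exists>i. w = replicate i x)"
  unfolding lists_singleton_eq_range by blast

lemma mem_conc_lists_singleton: "w \<in> conc (lists {x}) B \<longleftrightarrow> (\<exists>i v. w = replicate i x @ v \<and> v \<in> B)"
  unfolding conc_def lists_singleton by blast

lemma conc_singleton: "conc A {v} = (\<lambda>u. u @ v) ` A"
  unfolding conc_def by blast

lemma conc_singleton_left: "conc {u} B = (\<lambda>v. u @ v) ` B"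
  unfolding conc_def by blast

lemma nf_words_eq_conc: "nf_words x y = conc (lists {x}) (lists {y}) - {[]}"
  unfolding nf_words_def by (auto simp: mem_conc_lists_singleton lists_singleton) blast+

lemma regular_on_nf_words:
  "finite \<Sigma> \<Longrightarrow> x \<in> \<Sigma> \<Longrightarrow> y \<in> \<Sigma> \<Longrightarrow> regular_on \<Sigma> (nf_words x y)"
  unfolding nf_words_eq_conc
  by (intro regular_on_Diff regular_on_conc regular_on_lists regular_on_singleton) auto

lemma Pref_nf_words: "\<beta> \<in> Pref (nf_words x y) \<and> \<beta> \<noteq> [] \<longleftrightarrow> \<beta> \<in> nf_words x y"
proof
  assume "\<beta> \<in> Pref (nf_words x y) \<and> \<beta> \<noteq> []"
  then obtain \<gamma> i j where \<beta>: "\<beta> @ \<gamma> = replicate i x @ replicate j y" "\<beta> \<noteq> []"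
    unfolding Pref_def nf_words_def by auto
  then have "\<beta> = take (length \<beta>) (replicate i x @ replicate j y)"
    by (metis append_eq_conv_conj)
  also have "\<dots> = replicate (min (length \<beta>) i) x @ replicate (min (length \<beta> - i) j) y"
    by simp
  finally have "\<beta> = replicate (min (length \<beta>) i) x @ replicate (min (length \<beta> - i) j) y" .
  moreover from this \<beta>(2) have "min (length \<beta>) i + min (length \<beta> - i) j \<noteq> 0"
    by (metis add_is_0 append_Nil replicate_0)
  ultimately show "\<beta> \<in> nf_words x y"
    unfolding nf_words_def by blast
next
  assume "\<beta> \<in> nf_words x y"
  then show "\<beta> \<in> Pref (nf_words x y) \<and> \<beta> \<noteq> []"
    unfolding Pref_def nf_words_def by (force intro: exI[of _ "[]"])
qed

lemma pad_nf_words_same: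
  "pad (replicate i x @ replicate j y) (replicate i x @ replicate j y) =
    replicate i (Some x, Some x) @ replicate j (Some y, Some y)"
  by (simp add: pad_same)

lemma pad_nf_words_snoc:
  "pad (replicate i x @ replicate j y) (replicate i x @ replicate j y @ [y]) =
    replicate i (Some x, Some x) @ replicate j (Some y, Some y) @ [(None, Some y)]"
  using pad_snoc_right[of "replicate i x @ replicate j y" y] by simp

lemma pad_nf_words_Suc_0:
  "pad (replicate i x) (replicate (Suc i) x) = replicate i (Some x, Some x) @ [(None, Some x)]"
  using pad_snoc_right[of "replicate i x" x] by (simp add: replicate_append_same)

lemma pad_nf_words_Suc:
  "pad (replicate i x @ replicate (Suc j) y) (replicate (Suc i) x @ replicate (Suc j) y) =
    replicate i (Some x, Some x) @ (Some y, Some x) # replicate j (Some y, Some y) @ [(None, Some y)]"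
proof -
  have "replicate (Suc i) x @ replicate (Suc j) y = replicate i x @ x # replicate j y @ [y]"
    by (simp add: replicate_append_same[symmetric])
  then show ?thesis
    using pad_snoc_right[of "replicate j y" y]
    by (simp add: pad_append_same pad_Cons del: replicate.simps) (simp add: pad_Cons)
qed

lemma alphabet2_pairs:
  "x \<in> A \<Longrightarrow> y \<in> A \<Longrightarrow> (Some x, Some y) \<in> alphabet2 A \<and> (None, Some y) \<in> alphabet2 A"
  by (simp add: alphabet2_def)

lemma finite_alphabet2: "finite A \<Longrightarrow> finite (alphabet2 A)"
  by (simp add: alphabet2_def)

lemma regular_on_pads_same:
  assumes "finite A" "x \<in> A" "y \<in> A"
  shows "regular_on (alphabet2 A)
    {pad (replicate i x @ replicate j y) (replicate i x @ replicate j y) | i j. i + j \<noteq> 0}"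
  using regular_on_nf_words[of "alphabet2 A" "(Some x, Some x)" "(Some y, Some y)"] assms
  by (simp add: nf_words_def pad_nf_words_same finite_alphabet2 alphabet2_pairs)

lemma regular_on_pads_snoc:
  assumes "finite A" "x \<in> A" "y \<in> A"
  shows "regular_on (alphabet2 A)
    {pad (replicate i x @ replicate j y) (replicate i x @ replicate (Suc j) y) | i j. i + j \<noteq> 0}"
proof -
  have "{pad (replicate i x @ replicate j y) (replicate i x @ replicate (Suc j) y) | i j. i + j \<noteq> 0} =
      conc (nf_words (Some x, Some x) (Some y, Some y)) {[(None, Some y)]}"
    using pad_nf_words_snoc[of _ x _ y]
    unfolding conc_singleton nf_words_def by (force simp: replicate_append_same[symmetric])
  then show ?thesis
    using assms by (simp add: regular_on_conc regular_on_nf_words regular_on_singleton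
        finite_alphabet2 alphabet2_pairs)
qed

lemma pad_nf_words_shift_Suc:
  assumes "k \<le> 1"
  shows "pad (replicate i x @ replicate (Suc j) y) (replicate (i + k ^ Suc j) x @ replicate (Suc j) y) =
    replicate i (Some x, Some x) @
      (if k = 0 then replicate j (Some y, Some y) @ [(Some y, Some y)]
       else (Some y, Some x) # replicate j (Some y, Some y) @ [(None, Some y)])"
proof (cases "k = 0")
  case True then show ?thesis
    using pad_nf_words_same[of i x "Suc j" y] by (simp add: replicate_append_same)
next
  case False
  with assms have "k = 1" by simp
  then show ?thesis using pad_nf_words_Suc[of i x j y] by simp
qed

lemma pads_shift_eq_conc:
  fixes x y :: 'a and k :: nat
  assumes "k \<le> 1"
  defines "xx \<equiv> (Some x, Some x)" and "yy \<equiv> (Some y, Some y)" and "yx \<equiv> (Some y, Some x)"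
    and "nx \<equiv> (None, Some x)" and "ny \<equiv> (None, Some y)"
  shows "{pad (replicate i x @ replicate j y) (replicate (i + k ^ j) x @ replicate j y) | i j. i + j \<noteq> 0}
    = conc (lists {xx}) ({[xx, nx]} \<union>
        (if k = 0 then conc (lists {yy}) {[yy]} else conc {[yx]} (conc (lists {yy}) {[ny]})))"
    (is "?P = _")
proof -
  define tail where "tail j = (if k = 0 then replicate j yy @ [yy] else yx # replicate j yy @ [ny])"
    for j
  have shift_0: "pad (replicate (Suc i) x @ replicate 0 y) (replicate (Suc i + k ^ 0) x @ replicate 0 y)
      = replicate i xx @ [xx, nx]" for i
    using pad_nf_words_Suc_0[of "Suc i" x] by (simp add: xx_def nx_def replicate_append_same[symmetric])
  have shift_Suc: "pad (replicate i x @ replicate (Suc j) y) (replicate (i + k ^ Suc j) x @ replicate (Suc j) y)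
      = replicate i xx @ tail j" for i j
    unfolding tail_def xx_def yy_def yx_def ny_def by (rule pad_nf_words_shift_Suc[OF assms(1)])
  have "?P = range (\<lambda>i. replicate i xx @ [xx, nx]) \<union> range (\<lambda>(i, j). replicate i xx @ tail j)"
  proof (intro equalityI subsetI)
    fix w assume "w \<in> ?P"
    then obtain i j where w: "w = pad (replicate i x @ replicate j y) (replicate (i + k ^ j) x @ replicate j y)"
      and "i + j \<noteq> 0" by blast
    show "w \<in> range (\<lambda>i. replicate i xx @ [xx, nx]) \<union> range (\<lambda>(i, j). replicate i xx @ tail j)"
    proof (cases j)
      case 0
      with \<open>i + j \<noteq> 0\<close> obtain i' where "i = Suc i'" by (cases i) auto
      with w 0 shift_0 show ?thesis by auto
    qed (use w shift_Suc in auto)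
  next
    fix w assume "w \<in> range (\<lambda>i. replicate i xx @ [xx, nx]) \<union> range (\<lambda>(i, j). replicate i xx @ tail j)"
    then consider i where "w = replicate i xx @ [xx, nx]" | i j where "w = replicate i xx @ tail j"
      by auto
    then show "w \<in> ?P"
    proof cases
      case (1 i)
      then show ?thesis using shift_0[of i, symmetric] by fastforce
    next
      case (2 i j)
      then show ?thesis using shift_Suc[of i j, symmetric] by fastforce
    qed
  qed
  also have "\<dots> = conc (lists {xx}) ({[xx, nx]} \<union> range tail)"
    by (rule set_eqI) (auto simp: mem_conc_lists_singleton)
  also have "range tail = (if k = 0 then conc (lists {yy}) {[yy]} else conc {[yx]} (conc (lists {yy}) {[ny]}))"
    by (simp add: tail_def conc_singleton conc_singleton_left lists_singleton_eq_range image_image)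
  finally show ?thesis .
qed

lemma regular_on_pads_shift:
  assumes "finite A" "x \<in> A" "y \<in> A" "k \<le> 1"
  shows "regular_on (alphabet2 A)
    {pad (replicate i x @ replicate j y) (replicate (i + k ^ j) x @ replicate j y) | i j. i + j \<noteq> 0}"
proof -
  have \<Sigma>: "finite (alphabet2 A)" using assms(1) by (rule finite_alphabet2)
  have letters: "(Some x, Some x) \<in> alphabet2 A" "(Some y, Some y) \<in> alphabet2 A"
    "(Some y, Some x) \<in> alphabet2 A" "(None, Some x) \<in> alphabet2 A" "(None, Some y) \<in> alphabet2 A"
    using assms(2,3) by (simp_all add: alphabet2_def)
  have "regular_on (alphabet2 A) (if k = 0 then conc (lists {(Some y, Some y)}) {[(Some y, Some y)]}
      else conc {[(Some y, Some x)]} (conc (lists {(Some y, Some y)}) {[(None, Some y)]}))"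
    using \<Sigma> letters by (simp add: regular_on_conc regular_on_lists regular_on_singleton)
  then show ?thesis
    unfolding pads_shift_eq_conc[OF assms(4)]
    by (intro regular_on_conc regular_on_Un regular_on_lists regular_on_singleton)
      (simp_all add: \<Sigma> letters)
qed

section \<open>Length differences in automatic structures\<close>

lemma regular_on_tail_bounded:
  assumes reg: "regular_on \<Sigma> R"
    and bounded: "\<And>p. p \<in> P \<Longrightarrow> \<exists>B. \<forall>w. p @ map g w \<in> R \<longrightarrow> length w \<le> B"
  shows "\<exists>N. \<forall>p\<in>P. \<forall>w. p @ map g w \<in> R \<longrightarrow> length w \<le> N"
proof -
  obtain N where pump: "\<And>w1 w2 M. w1 @ w2 \<in> R \<Longrightarrow> N < length w2 \<Longrightarrow>
      \<exists>w2'. w1 @ w2' \<in> R \<and> M < length w2' \<and> set w2' \<subseteq> set w2"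
    using regular_on_pumping[OF reg] by blast
  have "length w \<le> N" if "p \<in> P" "p @ map g w \<in> R" for p w
  proof (rule ccontr)
    assume "\<not> length w \<le> N"
    obtain B where B: "\<And>w. p @ map g w \<in> R \<Longrightarrow> length w \<le> B"
      using bounded[OF \<open>p \<in> P\<close>] by blast
    from pump[OF \<open>p @ map g w \<in> R\<close>, of B] \<open>\<not> length w \<le> N\<close>
    obtain w2' where w2': "p @ w2' \<in> R" "B < length w2'" "set w2' \<subseteq> set (map g w)"
      by auto
    then obtain w' where "w2' = map g w'"
      by (metis ex_map_conv subsetD)
    with w2' B show False by fastforce
  qed
  then show ?thesis by blast
qed

lemma regular_on_pad_right_bounded:
  assumes "regular_on \<Sigma> R" and bounded: "\<And>u. \<exists>B. \<forall>v. pad u v \<in> R \<longrightarrow> length v \<le> B"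
  obtains N where "\<And>u v. pad u v \<in> R \<Longrightarrow> length v \<le> length u + N"
proof -
  let ?P = "{pad u v | u v. length u = length v}" and ?g = "\<lambda>y. (None, Some y)"
  have tails: "\<exists>B. \<forall>w. p @ map ?g w \<in> R \<longrightarrow> length w \<le> B" if "p \<in> ?P" for p
  proof -
    from that obtain u v where p: "p = pad u v" "length u = length v" by blast
    obtain B where B: "\<And>v. pad u v \<in> R \<Longrightarrow> length v \<le> B" using bounded by blast
    have "length w \<le> B" if "p @ map ?g w \<in> R" for w
      using B[of "v @ w"] that p pad_append_right[of u v w] by simp
    then show ?thesis by blast
  qed
  obtain N where N: "\<forall>p\<in>?P. \<forall>w. p @ map ?g w \<in> R \<longrightarrow> length w \<le> N"
    using regular_on_tail_bounded[OF assms(1) tails] by (rule exE)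
  have "length v \<le> length u + N" if "pad u v \<in> R" for u v
  proof (cases "length u \<le> length v")
    case True
    then have "length u = length (take (length u) v)" by simp
    then have "pad u (take (length u) v) \<in> ?P" by blast
    moreover have "pad u (take (length u) v) @ map ?g (drop (length u) v) \<in> R"
      using that pad_append_right[of u "take (length u) v" "drop (length u) v"] True by simp
    ultimately have "length (drop (length u) v) \<le> N" using N by blast
    then show ?thesis by simp
  qed simp
  then show ?thesis using that by blast
qed

lemma regular_on_pad_left_bounded:
  assumes "regular_on \<Sigma> R" and bounded: "\<And>v. \<exists>B. \<forall>u. pad u v \<in> R \<longrightarrow> length u \<le> B"
  obtains N where "\<And>u v. pad u v \<in> R \<Longrightarrow> length u \<le> length v + N"
proof -
  let ?P = "{pad u v | u v. length u = length v}" and ?g = "\<lambda>x. (Some x, None)"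
  have tails: "\<exists>B. \<forall>w. p @ map ?g w \<in> R \<longrightarrow> length w \<le> B" if "p \<in> ?P" for p
  proof -
    from that obtain u v where p: "p = pad u v" "length u = length v" by blast
    obtain B where B: "\<And>u. pad u v \<in> R \<Longrightarrow> length u \<le> B" using bounded by blast
    have "length w \<le> B" if "p @ map ?g w \<in> R" for w
      using B[of "u @ w"] that p pad_append_left[of u v w] by simp
    then show ?thesis by blast
  qed
  obtain N where N: "\<forall>p\<in>?P. \<forall>w. p @ map ?g w \<in> R \<longrightarrow> length w \<le> N"
    using regular_on_tail_bounded[OF assms(1) tails] by (rule exE)
  have "length u \<le> length v + N" if "pad u v \<in> R" for u v
  proof (cases "length v \<le> length u")
    case True
    then have "length (take (length v) u) = length v" by simp
    then have "pad (take (length v) u) v \<in> ?P" by blast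
    moreover have "pad (take (length v) u) v @ map ?g (drop (length v) u) \<in> R"
      using that pad_append_left[of "take (length v) u" v "drop (length v) u"] True by simp
    ultimately have "length (drop (length v) u) \<le> N" using N by blast
    then show ?thesis by simp
  qed simp
  then show ?thesis using that by blast
qed

lemma finite_lists_length_bounded: "finite S \<Longrightarrow> \<exists>B. \<forall>w\<in>S. length w \<le> B"
  using finite_nat_set_iff_bounded_le[of "length ` S"] by auto

lemma pad_mem_L_dollar:
  "pad \<alpha> \<beta> \<in> L_dollar m L a \<longleftrightarrow> \<alpha> \<in> L \<and> \<beta> \<in> L \<and> sg_eval m (\<alpha> @ a) = sg_eval m \<beta>"
proof
  assume "pad \<alpha> \<beta> \<in> L_dollar m L a"
  then obtain \<alpha>' \<beta>' where "pad \<alpha> \<beta> = pad \<alpha>' \<beta>'" "\<alpha>' \<in> L" "\<beta>' \<in> L"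
    "sg_eval m (\<alpha>' @ a) = sg_eval m \<beta>'"
    unfolding L_dollar_def by blast
  moreover from pad_inject[OF this(1)] have "\<alpha> = \<alpha>'" "\<beta> = \<beta>'" by simp_all
  ultimately show "\<alpha> \<in> L \<and> \<beta> \<in> L \<and> sg_eval m (\<alpha> @ a) = sg_eval m \<beta>"
    by simp
qed (auto simp: L_dollar_def)

lemma automatic_structure_length_difference:
  assumes AS: "automatic_structure C m A L" and "a \<in> A"
    and fibres: "\<And>s. finite {\<gamma> \<in> lists A. \<gamma> \<noteq> [] \<and> sg_eval m \<gamma> = s}"
  shows "\<exists>N. \<forall>\<alpha>\<in>L. \<forall>\<beta>\<in>L. sg_eval m (\<alpha> @ [a]) = sg_eval m \<beta> \<longrightarrow>
    length \<alpha> \<le> length \<beta> + N \<and> length \<beta> \<le> length \<alpha> + N"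
proof -
  let ?R = "L_dollar m L [a]"
  have reg: "regular_on (alphabet2 A) ?R"
    using AS \<open>a \<in> A\<close> by (simp add: automatic_structure_def)
  have L: "L \<subseteq> lists A" "\<forall>w\<in>L. w \<noteq> []"
    using AS by (simp_all add: automatic_structure_def regular_on_def)
  note mem = pad_mem_L_dollar[of _ _ m L "[a]"]
  have fibre_bounded: "\<exists>B. \<forall>\<gamma>. \<gamma> \<in> lists A \<and> \<gamma> \<noteq> [] \<and> sg_eval m \<gamma> = s \<longrightarrow> length \<gamma> \<le> B" for s
    using finite_lists_length_bounded[OF fibres[of s]] by blast
  have "\<exists>B. \<forall>\<beta>. pad \<alpha> \<beta> \<in> ?R \<longrightarrow> length \<beta> \<le> B" for \<alpha>
  proof -
    obtain B where B: "\<And>\<gamma>. \<gamma> \<in> lists A \<Longrightarrow> \<gamma> \<noteq> [] \<Longrightarrow> sg_eval m \<gamma> = sg_eval m (\<alpha> @ [a]) \<Longrightarrow>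
        length \<gamma> \<le> B"
      using fibre_bounded[of "sg_eval m (\<alpha> @ [a])"] by blast
    have "length \<beta> \<le> B" if "pad \<alpha> \<beta> \<in> ?R" for \<beta>
      using B[of \<beta>] that L unfolding mem by auto
    then show ?thesis by blast
  qed
  then obtain N1 where N1: "\<And>\<alpha> \<beta>. pad \<alpha> \<beta> \<in> ?R \<Longrightarrow> length \<beta> \<le> length \<alpha> + N1"
    using regular_on_pad_right_bounded[OF reg] by blast
  have "\<exists>B. \<forall>\<alpha>. pad \<alpha> \<beta> \<in> ?R \<longrightarrow> length \<alpha> \<le> B" for \<beta>
  proof -
    obtain B where B: "\<And>\<gamma>. \<gamma> \<in> lists A \<Longrightarrow> \<gamma> \<noteq> [] \<Longrightarrow> sg_eval m \<gamma> = sg_eval m \<beta> \<Longrightarrow> length \<gamma> \<le> B"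
      using fibre_bounded[of "sg_eval m \<beta>"] by blast
    have "length \<alpha> \<le> B" if "pad \<alpha> \<beta> \<in> ?R" for \<alpha>
      using B[of "\<alpha> @ [a]"] that L \<open>a \<in> A\<close> unfolding mem by (auto simp: subset_iff)
    then show ?thesis by blast
  qed
  then obtain N2 where N2: "\<And>\<alpha> \<beta>. pad \<alpha> \<beta> \<in> ?R \<Longrightarrow> length \<alpha> \<le> length \<beta> + N2"
    using regular_on_pad_left_bounded[OF reg] by blast
  show ?thesis
  proof (intro exI[of _ "N1 + N2"] ballI impI)
    fix \<alpha> \<beta> assume "\<alpha> \<in> L" "\<beta> \<in> L" "sg_eval m (\<alpha> @ [a]) = sg_eval m \<beta>"
    then have "pad \<alpha> \<beta> \<in> ?R" using mem by blast
    with N1 N2 show "length \<alpha> \<le> length \<beta> + (N1 + N2) \<and> length \<beta> \<le> length \<alpha> + (N1 + N2)"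
      by fastforce
  qed
qed

text \<open>\<open>w\<close> is congruent to \<open>a\<^sup>i b\<^sup>j\<close> for \<open>(i, j) = nf_coords k w\<close>, since \<open>b a\<^sup>i = a\<^bsup>k i\<^esup> b\<close>.\<close>
fun nf_coords :: "nat \<Rightarrow> ab list \<Rightarrow> nat \<times> nat" where
  "nf_coords k [] = (0, 0)"
| "nf_coords k (La # w) = (Suc (fst (nf_coords k w)), snd (nf_coords k w))"
| "nf_coords k (Lb # w) = (k * fst (nf_coords k w), Suc (snd (nf_coords k w)))"

lemma nf_coords_append:
  "nf_coords k (u @ v) =
     (fst (nf_coords k u) + k ^ snd (nf_coords k u) * fst (nf_coords k v),
      snd (nf_coords k u) + snd (nf_coords k v))"
  by (induction k u rule: nf_coords.induct) (auto simp: algebra_simps)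

lemma nf_coords_replicate_La [simp]: "nf_coords k (replicate i La) = (i, 0)"
  by (induction i) auto

lemma nf_coords_replicate_Lb [simp]: "nf_coords k (replicate j Lb) = (0, j)"
  by (induction j) auto

lemma nf_coords_normal_form [simp]: "nf_coords k (replicate i La @ replicate j Lb) = (i, j)"
  by (simp add: nf_coords_append)

lemma nf_coords_snd_eq_0: "snd (nf_coords k w) = 0 \<Longrightarrow> nf_coords k w = (length w, 0)"
proof (induction w)
  case (Cons c w) then show ?case by (cases c) auto
qed simp

definition nf_size :: "nat \<Rightarrow> ab list \<Rightarrow> nat" where
  "nf_size k w = fst (nf_coords k w) + snd (nf_coords k w)"

lemma nf_size_pos: "w \<noteq> [] \<Longrightarrow> 1 \<le> nf_size k w"
  by (cases w rule: list.exhaust; cases "hd w") (auto simp: nf_size_def)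

lemma nf_size_append: "1 \<le> k \<Longrightarrow> nf_size k u + nf_size k v \<le> nf_size k (u @ v)"
  by (simp add: nf_size_def nf_coords_append)

lemma rstep_nf_coords_eq: "(u, v) \<in> rstep k \<Longrightarrow> nf_coords k u = nf_coords k v"
  unfolding rstep_def by (auto simp: nf_coords_append algebra_simps)

lemma cong_k_trans: "(u, v) \<in> cong_k k \<Longrightarrow> (v, w) \<in> cong_k k \<Longrightarrow> (u, w) \<in> cong_k k"
  unfolding cong_k_def by (rule rtrancl_trans)

lemma cong_k_sym: "(u, v) \<in> cong_k k \<Longrightarrow> (v, u) \<in> cong_k k"
  unfolding cong_k_def by (metis sym_Un_converse sym_rtrancl symD)

lemma cong_k_append_context:
  assumes "(u, v) \<in> cong_k k" shows "(p @ u @ s, p @ v @ s) \<in> cong_k k"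
proof -
  have "(p @ u @ s, p @ v @ s) \<in> rstep k" if "(u, v) \<in> rstep k" for u v
  proof -
    from that obtain x y where "u = x @ replicate k La @ [Lb] @ y" "v = x @ [Lb, La] @ y"
      unfolding rstep_def by blast
    then have "p @ u @ s = (p @ x) @ replicate k La @ [Lb] @ (y @ s)"
      and "p @ v @ s = (p @ x) @ [Lb, La] @ (y @ s)" by simp_all
    then show ?thesis unfolding rstep_def by blast
  qed
  then have "(p @ u @ s, p @ v @ s) \<in> rstep k \<union> (rstep k)\<inverse>"
    if "(u, v) \<in> rstep k \<union> (rstep k)\<inverse>" for u v
    using that by blast
  with assms show ?thesis
    unfolding cong_k_def by (induction rule: rtrancl_induct) (auto intro: rtrancl_into_rtrancl)
qed

lemma Lb_replicate_La_cong_k: "(Lb # replicate i La, replicate (k * i) La @ [Lb]) \<in> cong_k k"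
proof (induction i)
  case (Suc i)
  have "(replicate k La @ [Lb] @ replicate i La, [] @ [Lb, La] @ replicate i La) \<in> rstep k"
    unfolding rstep_def by blast
  then have "(Lb # replicate (Suc i) La, replicate k La @ Lb # replicate i La) \<in> cong_k k"
    unfolding cong_k_def by auto
  moreover have "(replicate k La @ Lb # replicate i La, replicate (k * Suc i) La @ [Lb]) \<in> cong_k k"
    using cong_k_append_context[OF Suc.IH, where p = "replicate k La" and s = "[]"]
    by (simp add: replicate_add)
  ultimately show ?case by (rule cong_k_trans)
qed (simp add: cong_k_def)

lemma cong_k_normal_form:
  "(w, replicate (fst (nf_coords k w)) La @ replicate (snd (nf_coords k w)) Lb) \<in> cong_k k"
proof (induction w)
  case Nil then show ?case by (simp add: cong_k_def)
next
  case (Cons c w)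
  define i j where "i = fst (nf_coords k w)" and "j = snd (nf_coords k w)"
  have "(c # w, c # replicate i La @ replicate j Lb) \<in> cong_k k"
    using cong_k_append_context[OF Cons.IH, where p = "[c]" and s = "[]"] by (simp add: i_def j_def)
  moreover have "(Lb # replicate i La @ replicate j Lb, replicate (k * i) La @ [Lb] @ replicate j Lb)
      \<in> cong_k k"
    using cong_k_append_context[OF Lb_replicate_La_cong_k, where p = "[]" and s = "replicate j Lb"]
    by simp
  ultimately show ?case
    by (cases c) (auto simp: i_def j_def intro: cong_k_trans)
qed

lemma cong_k_iff: "(u, v) \<in> cong_k k \<longleftrightarrow> nf_coords k u = nf_coords k v"
proof
  assume "(u, v) \<in> cong_k k"
  then show "nf_coords k u = nf_coords k v"
    unfolding cong_k_def by (induction rule: rtrancl_induct) (auto dest: rstep_nf_coords_eq)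
next
  assume "nf_coords k u = nf_coords k v"
  then show "(u, v) \<in> cong_k k"
    using cong_k_normal_form[of u k] cong_k_normal_form[of v k]
    by (metis cong_k_sym cong_k_trans)
qed

lemma equiv_cong_k: "equiv UNIV (cong_k k)"
  unfolding cong_k_def equiv_def
  by (auto simp: refl_rtrancl sym_rtrancl sym_Un_converse trans_rtrancl)

abbreviation ab_class :: "nat \<Rightarrow> ab list \<Rightarrow> ab list set" where
  "ab_class k w \<equiv> cong_k k `` {w}"

lemma ab_class_eq_iff: "ab_class k u = ab_class k v \<longleftrightarrow> nf_coords k u = nf_coords k v"
  using equiv_class_eq_iff[OF equiv_cong_k] cong_k_iff by blast

lemma S_carrier_iff: "X \<in> S_carrier k \<longleftrightarrow> (\<exists>w. w \<noteq> [] \<and> X = ab_class k w)"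
  unfolding S_carrier_def quotient_def by blast

lemma S_mult_ab_class: "S_mult k (ab_class k u) (ab_class k v) = ab_class k (u @ v)"
  unfolding S_mult_def by (auto simp: cong_k_iff nf_coords_append)

lemma sg_eval_singleton [simp]: "sg_eval m [x] = x"
  by (simp add: sg_eval_def)

lemma sg_eval_snoc: "w \<noteq> [] \<Longrightarrow> sg_eval m (w @ [x]) = m (sg_eval m w) x"
  by (cases w) (simp_all add: sg_eval_def)

lemma sg_eval_S_mult:
  assumes "w \<noteq> []" and "\<And>g. g \<in> set w \<Longrightarrow> g = ab_class k (rep g)"
  shows "sg_eval (S_mult k) w = ab_class k (concat (map rep w))"
  using assms
proof (induction w rule: rev_induct)
  case (snoc g w)
  have g: "g = ab_class k (rep g)" using snoc.prems(2) by simp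
  show ?case
  proof (cases "w = []")
    case False
    have "sg_eval (S_mult k) (w @ [g]) = S_mult k (sg_eval (S_mult k) w) g"
      by (rule sg_eval_snoc[OF False])
    also have "\<dots> = S_mult k (ab_class k (concat (map rep w))) (ab_class k (rep g))"
      using snoc.IH[OF False] snoc.prems(2) g by simp
    finally show ?thesis by (simp add: S_mult_ab_class)
  qed (use g in simp)
qed simp

section \<open>No automatic structure for \<open>k \<ge> 2\<close>\<close>

lemma linear_lt_exponential:
  assumes "2 \<le> (k::nat)" shows "\<exists>n>0. D * (n + 1) < k ^ n"
proof -
  define m where "m = 2 * D + 1"
  have "D * (2 * m + 1) < (m + 1) * (m + 1)"
    by (simp add: m_def algebra_simps)
  also have "\<dots> \<le> 2 ^ m * 2 ^ m"
    by (intro mult_le_mono) (simp_all add: Suc_leI)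
  also have "\<dots> = 2 ^ (2 * m)" by (simp add: power_add[symmetric])
  also have "\<dots> \<le> k ^ (2 * m)" using assms by (simp add: power_mono)
  finally show ?thesis by (intro exI[of _ "2 * m"]) (simp add: m_def)
qed

locale S_automatic =
  fixes k :: nat and A :: "ab list set set" and L :: "ab list set list set"
    and rep :: "ab list set \<Rightarrow> ab list"
  assumes k: "1 \<le> k"
    and AS: "automatic_structure (S_carrier k) (S_mult k) A L"
    and rep: "\<And>g. g \<in> A \<Longrightarrow> rep g \<noteq> [] \<and> g = ab_class k (rep g)"
begin

lemma L_lists: "L \<subseteq> lists A" and L_nonempty: "\<gamma> \<in> L \<Longrightarrow> \<gamma> \<noteq> []"
  using AS by (simp_all add: automatic_structure_def regular_on_def)

lemma exists_representative: "w \<noteq> [] \<Longrightarrow> \<exists>\<gamma>\<in>L. sg_eval (S_mult k) \<gamma> = ab_class k w"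
  using AS S_carrier_iff unfolding automatic_structure_def by (metis imageE)

lemma sg_eval_lists_rep:
  "\<gamma> \<in> lists A \<Longrightarrow> \<gamma> \<noteq> [] \<Longrightarrow> sg_eval (S_mult k) \<gamma> = ab_class k (concat (map rep \<gamma>))"
  using rep by (intro sg_eval_S_mult) auto

lemma length_le_nf_size:
  assumes "\<gamma> \<in> lists A" and "\<gamma> \<noteq> []" and "sg_eval (S_mult k) \<gamma> = ab_class k w"
  shows "length \<gamma> \<le> nf_size k w"
proof -
  have "length \<gamma> \<le> nf_size k (concat (map rep \<gamma>))"
    using \<open>\<gamma> \<in> lists A\<close>
  proof (induction \<gamma>)
    case (Cons g \<gamma>)
    then have "1 \<le> nf_size k (rep g)" using rep nf_size_pos by auto
    with Cons nf_size_append[OF k, of "rep g" "concat (map rep \<gamma>)"] show ?case by simp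
  qed simp
  moreover have "nf_coords k (concat (map rep \<gamma>)) = nf_coords k w"
    using assms sg_eval_lists_rep ab_class_eq_iff by metis
  ultimately show ?thesis by (simp add: nf_size_def)
qed

lemma ab_class_letter_in_generators: "ab_class k [c] \<in> A"
proof -
  obtain \<gamma> where \<gamma>: "\<gamma> \<in> L" "sg_eval (S_mult k) \<gamma> = ab_class k [c]"
    using exists_representative by blast
  then have "\<gamma> \<in> lists A" "\<gamma> \<noteq> []" using L_lists L_nonempty by auto
  moreover have "nf_size k [c] = 1" by (cases c) (simp_all add: nf_size_def)
  ultimately have "length \<gamma> \<le> 1" using length_le_nf_size \<gamma>(2) by metis
  with \<open>\<gamma> \<noteq> []\<close> obtain g where "\<gamma> = [g]" by (cases \<gamma>) auto
  with \<gamma> \<open>\<gamma> \<in> lists A\<close> show ?thesis by simp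
qed

lemma finite_fibres: "finite {\<gamma> \<in> lists A. \<gamma> \<noteq> [] \<and> sg_eval (S_mult k) \<gamma> = X}"
proof (cases "\<exists>w. X = ab_class k w")
  case True
  then obtain w where "X = ab_class k w" by blast
  then have "{\<gamma> \<in> lists A. \<gamma> \<noteq> [] \<and> sg_eval (S_mult k) \<gamma> = X} \<subseteq>
      {\<gamma>. set \<gamma> \<subseteq> A \<and> length \<gamma> \<le> nf_size k w}"
    using length_le_nf_size by auto
  moreover have "finite A" using AS by (simp add: automatic_structure_def)
  ultimately show ?thesis by (rule finite_subset[OF _ finite_lists_length_le])
next
  case False
  then have "{\<gamma> \<in> lists A. \<gamma> \<noteq> [] \<and> sg_eval (S_mult k) \<gamma> = X} = {}"
    using sg_eval_lists_rep by auto
  then show ?thesis by (metis finite.emptyI)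
qed

lemma La_power_le_length:
  assumes "\<gamma> \<in> lists A" and "\<gamma> \<noteq> []" and "sg_eval (S_mult k) \<gamma> = ab_class k (replicate K La)"
  shows "K \<le> Max (length ` rep ` A) * length \<gamma>"
proof -
  define w where "w = concat (map rep \<gamma>)"
  have "nf_coords k w = (K, 0)"
    using assms sg_eval_lists_rep ab_class_eq_iff nf_coords_normal_form[of k K 0]
    unfolding w_def by (metis append_Nil2 replicate_0)
  then have "K = length w" using nf_coords_snd_eq_0[of k w] by simp
  also have "\<dots> \<le> Max (length ` rep ` A) * length \<gamma>"
    using \<open>\<gamma> \<in> lists A\<close> unfolding w_def
  proof (induction \<gamma>)
    case (Cons g \<gamma>)
    have "finite A" using AS by (simp add: automatic_structure_def)
    with Cons have "length (rep g) \<le> Max (length ` rep ` A)" by simp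
    with Cons show ?case by simp
  qed simp
  finally show ?thesis .
qed

lemma short_representatives_of_La_powers:
  obtains N where "\<And>n. 0 < n \<Longrightarrow> \<exists>\<gamma>\<in>L.
    sg_eval (S_mult k) \<gamma> = ab_class k (replicate (k ^ n) La) \<and> length \<gamma> \<le> (N + 1) * (n + 1)"
proof -
  note length_difference =
    automatic_structure_length_difference[OF AS ab_class_letter_in_generators finite_fibres]
  obtain Na where Na: "\<forall>\<alpha>\<in>L. \<forall>\<beta>\<in>L. sg_eval (S_mult k) (\<alpha> @ [ab_class k [La]]) = sg_eval (S_mult k) \<beta> \<longrightarrow>
      length \<alpha> \<le> length \<beta> + Na \<and> length \<beta> \<le> length \<alpha> + Na"
    using length_difference by (rule exE)
  obtain Nb where Nb: "\<forall>\<alpha>\<in>L. \<forall>\<beta>\<in>L. sg_eval (S_mult k) (\<alpha> @ [ab_class k [Lb]]) = sg_eval (S_mult k) \<beta> \<longrightarrow>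
      length \<alpha> \<le> length \<beta> + Nb \<and> length \<beta> \<le> length \<alpha> + Nb"
    using length_difference by (rule exE)
  have "\<exists>\<gamma>\<in>L. sg_eval (S_mult k) \<gamma> = ab_class k (replicate (k ^ n) La) \<and>
      length \<gamma> \<le> (Na + Nb + 1) * (n + 1)" if "0 < n" for n
  proof -
    have "\<forall>t. \<exists>\<gamma>\<in>L. sg_eval (S_mult k) \<gamma> = ab_class k (replicate (k ^ n) La @ replicate t Lb)"
      using exists_representative k by simp
    then obtain \<alpha> where \<alpha>: "\<And>t. \<alpha> t \<in> L"
      "\<And>t. sg_eval (S_mult k) (\<alpha> t) = ab_class k (replicate (k ^ n) La @ replicate t Lb)"
      by metis
    obtain \<beta> where \<beta>: "\<beta> \<in> L" "sg_eval (S_mult k) \<beta> = ab_class k (replicate n Lb)"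
      using exists_representative[of "replicate n Lb"] \<open>0 < n\<close> by auto
    have step: "length (\<alpha> t) \<le> length (\<alpha> (Suc t)) + Nb" for t
    proof -
      have "sg_eval (S_mult k) (\<alpha> t @ [ab_class k [Lb]]) =
          ab_class k (replicate (k ^ n) La @ replicate t Lb @ [Lb])"
        using \<alpha> L_nonempty by (simp add: sg_eval_snoc S_mult_ab_class)
      also have "\<dots> = sg_eval (S_mult k) (\<alpha> (Suc t))"
        by (simp add: \<alpha>(2) replicate_append_same[symmetric])
      finally show ?thesis using Nb \<alpha>(1) by blast
    qed
    have chain: "length (\<alpha> 0) \<le> length (\<alpha> t) + t * Nb" for t
      by (induction t) (use step in \<open>auto intro: order_trans\<close>)
    have "sg_eval (S_mult k) (\<beta> @ [ab_class k [La]]) = ab_class k (replicate n Lb @ [La])"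
      using \<beta> L_nonempty by (simp add: sg_eval_snoc S_mult_ab_class)
    also have "\<dots> = sg_eval (S_mult k) (\<alpha> n)"
      by (simp add: \<alpha>(2) ab_class_eq_iff nf_coords_append)
    finally have "length (\<alpha> n) \<le> length \<beta> + Na" using Na \<alpha>(1) \<beta>(1) by blast
    moreover have "length \<beta> \<le> n"
      using length_le_nf_size[of \<beta> "replicate n Lb"] \<beta> L_lists L_nonempty by (auto simp: nf_size_def)
    ultimately have "length (\<alpha> 0) \<le> (Na + Nb + 1) * (n + 1)"
      using chain[of n] by (simp add: algebra_simps)
    with \<alpha>[of 0] show ?thesis by auto
  qed
  then show thesis by (rule that)
qed

lemma le_1: "k \<le> 1"
proof (rule ccontr)
  assume "\<not> k \<le> 1"
  obtain N where N: "\<And>n. 0 < n \<Longrightarrow> \<exists>\<gamma>\<in>L.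
      sg_eval (S_mult k) \<gamma> = ab_class k (replicate (k ^ n) La) \<and> length \<gamma> \<le> (N + 1) * (n + 1)"
    using short_representatives_of_La_powers by blast
  define c where "c = Max (length ` rep ` A)"
  obtain n where "0 < n" and n: "c * (N + 1) * (n + 1) < k ^ n"
    using linear_lt_exponential[of k "c * (N + 1)"] \<open>\<not> k \<le> 1\<close> by auto
  then obtain \<gamma> where \<gamma>: "\<gamma> \<in> L" "sg_eval (S_mult k) \<gamma> = ab_class k (replicate (k ^ n) La)"
    and "length \<gamma> \<le> (N + 1) * (n + 1)"
    using N by blast
  have "k ^ n \<le> c * length \<gamma>"
    using La_power_le_length[of \<gamma> "k ^ n"] \<gamma> L_lists L_nonempty unfolding c_def by auto
  also have "\<dots> \<le> c * (N + 1) * (n + 1)"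
    using mult_le_mono2[OF \<open>length \<gamma> \<le> (N + 1) * (n + 1)\<close>, of c] by (simp add: algebra_simps)
  finally show False using n by simp
qed

end

section \<open>A prefix-automatic structure for \<open>k \<le> 1\<close>\<close>

lemma ab_class_letter_eq_iff: "ab_class k [c] = ab_class k [d] \<longleftrightarrow> c = d"
  by (cases c; cases d) (simp_all add: ab_class_eq_iff)

lemma sg_eval_letters:
  assumes "w \<noteq> []" shows "sg_eval (S_mult k) (map (\<lambda>c. ab_class k [c]) w) = ab_class k w"
proof -
  define rep where "rep g = (if g = ab_class k [La] then [La] else [Lb])" for g
  have rep: "rep (ab_class k [c]) = [c]" for c
    by (cases c) (simp_all add: rep_def ab_class_letter_eq_iff)
  then have "sg_eval (S_mult k) (map (\<lambda>c. ab_class k [c]) w) =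
      ab_class k (concat (map rep (map (\<lambda>c. ab_class k [c]) w)))"
    using assms by (intro sg_eval_S_mult) auto
  also have "concat (map rep (map (\<lambda>c. ab_class k [c]) w)) = w"
    by (induction w) (simp_all add: rep)
  finally show ?thesis .
qed

lemma sg_eval_nf_word_append:
  assumes "i + j \<noteq> 0"
  shows "sg_eval (S_mult k) (replicate i (ab_class k [La]) @ replicate j (ab_class k [Lb]) @
      map (\<lambda>c. ab_class k [c]) a) = ab_class k (replicate i La @ replicate j Lb @ a)"
  using assms sg_eval_letters[of "replicate i La @ replicate j Lb @ a" k] by auto

lemma sg_eval_replicate_letters:
  "i + j \<noteq> 0 \<Longrightarrow> sg_eval (S_mult k) (replicate i (ab_class k [La]) @ replicate j (ab_class k [Lb])) =
    ab_class k (replicate i La @ replicate j Lb)"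
  using sg_eval_nf_word_append[of i j k "[]"] by simp

lemma L_dollar_nf_words:
  fixes k :: nat and a :: "ab list"
  defines "X \<equiv> ab_class k [La]" and "Y \<equiv> ab_class k [Lb]"
    and "nf \<equiv> \<lambda>i j. nf_coords k (replicate i La @ replicate j Lb @ a)"
  shows "L_dollar (S_mult k) (nf_words X Y) (map (\<lambda>c. ab_class k [c]) a) =
    {pad (replicate i X @ replicate j Y) (replicate (fst (nf i j)) X @ replicate (snd (nf i j)) Y)
      | i j. i + j \<noteq> 0}"
proof -
  have eval: "sg_eval (S_mult k) ((replicate i X @ replicate j Y) @ map (\<lambda>c. ab_class k [c]) a)
      = ab_class k (replicate i La @ replicate j Lb @ a)"
    and eval': "sg_eval (S_mult k) (replicate i X @ replicate j Y) = ab_class k (replicate i La @ replicate j Lb)"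
    if "i + j \<noteq> 0" for i j
    using sg_eval_nf_word_append[OF that] sg_eval_replicate_letters[OF that]
    unfolding X_def Y_def by simp_all
  have nf_ne: "fst (nf i j) + snd (nf i j) \<noteq> 0" if "i + j \<noteq> 0" for i j
    using that nf_size_pos[of "replicate i La @ replicate j Lb @ a" k]
    unfolding nf_def nf_size_def by auto
  show ?thesis
  proof (intro equalityI subsetI)
    fix w assume "w \<in> L_dollar (S_mult k) (nf_words X Y) (map (\<lambda>c. ab_class k [c]) a)"
    then obtain i j i' j' where w: "w = pad (replicate i X @ replicate j Y) (replicate i' X @ replicate j' Y)"
      and ij: "i + j \<noteq> 0" "i' + j' \<noteq> 0"
      and "sg_eval (S_mult k) ((replicate i X @ replicate j Y) @ map (\<lambda>c. ab_class k [c]) a) =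
        sg_eval (S_mult k) (replicate i' X @ replicate j' Y)"
      unfolding L_dollar_def nf_words_def by blast
    then have "nf i j = (i', j')"
      using eval[OF ij(1)] eval'[OF ij(2)] unfolding nf_def by (simp add: ab_class_eq_iff)
    with w have "w = pad (replicate i X @ replicate j Y)
        (replicate (fst (nf i j)) X @ replicate (snd (nf i j)) Y)" by simp
    with ij(1) show "w \<in> {pad (replicate i X @ replicate j Y)
        (replicate (fst (nf i j)) X @ replicate (snd (nf i j)) Y) | i j. i + j \<noteq> 0}"
      by blast
  next
    fix w assume "w \<in> {pad (replicate i X @ replicate j Y)
        (replicate (fst (nf i j)) X @ replicate (snd (nf i j)) Y) | i j. i + j \<noteq> 0}"
    then obtain i j where w: "w = pad (replicate i X @ replicate j Y)
        (replicate (fst (nf i j)) X @ replicate (snd (nf i j)) Y)" and "i + j \<noteq> 0"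
      by blast
    moreover have "sg_eval (S_mult k) ((replicate i X @ replicate j Y) @ map (\<lambda>c. ab_class k [c]) a) =
        sg_eval (S_mult k) (replicate (fst (nf i j)) X @ replicate (snd (nf i j)) Y)"
      using eval[OF \<open>i + j \<noteq> 0\<close>] eval'[OF nf_ne[OF \<open>i + j \<noteq> 0\<close>]]
      unfolding nf_def by (simp add: ab_class_eq_iff)
    ultimately show "w \<in> L_dollar (S_mult k) (nf_words X Y) (map (\<lambda>c. ab_class k [c]) a)"
      using nf_ne unfolding L_dollar_def nf_words_def by blast
  qed
qed

lemma sg_eval_nf_words:
  "sg_eval (S_mult k) ` nf_words (ab_class k [La]) (ab_class k [Lb]) = S_carrier k"
proof (intro equalityI subsetI)
  fix X assume "X \<in> sg_eval (S_mult k) ` nf_words (ab_class k [La]) (ab_class k [Lb])"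
  then obtain i j where "i + j \<noteq> 0"
    and "X = sg_eval (S_mult k) (replicate i (ab_class k [La]) @ replicate j (ab_class k [Lb]))"
    unfolding nf_words_def by blast
  then have "X = ab_class k (replicate i La @ replicate j Lb)" "replicate i La @ replicate j Lb \<noteq> []"
    by (auto simp: sg_eval_replicate_letters)
  then show "X \<in> S_carrier k" unfolding S_carrier_iff by blast
next
  fix X assume "X \<in> S_carrier k"
  then obtain w where "w \<noteq> []" "X = ab_class k w" by (auto simp: S_carrier_iff)
  moreover obtain i j where "nf_coords k w = (i, j)" by (cases "nf_coords k w")
  ultimately have "X = ab_class k (replicate i La @ replicate j Lb)" and ij: "i + j \<noteq> 0"
    using nf_size_pos[of w k] by (auto simp: ab_class_eq_iff nf_size_def)
  moreover have "replicate i (ab_class k [La]) @ replicate j (ab_class k [Lb])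
      \<in> nf_words (ab_class k [La]) (ab_class k [Lb])"
    unfolding nf_words_def using ij by blast
  ultimately show "X \<in> sg_eval (S_mult k) ` nf_words (ab_class k [La]) (ab_class k [Lb])"
    using sg_eval_replicate_letters[OF ij] by (metis image_eqI)
qed

lemma automatic_structure_nf_words:
  assumes "k \<le> 1"
  shows "automatic_structure (S_carrier k) (S_mult k) {ab_class k [La], ab_class k [Lb]}
    (nf_words (ab_class k [La]) (ab_class k [Lb]))"
proof -
  let ?A = "{ab_class k [La], ab_class k [Lb]}"
    and ?L = "nf_words (ab_class k [La]) (ab_class k [Lb])"
  have finite: "finite ?A" by simp
  have "regular_on (alphabet2 ?A) (L_dollar (S_mult k) ?L [])"
    using regular_on_pads_same[OF finite, of "ab_class k [La]" "ab_class k [Lb]"]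
      L_dollar_nf_words[of k "[]"] by simp
  moreover have "regular_on (alphabet2 ?A) (L_dollar (S_mult k) ?L [ab_class k [La]])"
    using regular_on_pads_shift[OF finite, of "ab_class k [La]" "ab_class k [Lb]", OF _ _ assms]
      L_dollar_nf_words[of k "[La]"] by (simp add: nf_coords_append)
  moreover have "regular_on (alphabet2 ?A) (L_dollar (S_mult k) ?L [ab_class k [Lb]])"
    using regular_on_pads_snoc[OF finite, of "ab_class k [La]" "ab_class k [Lb]"]
      L_dollar_nf_words[of k "[Lb]"] by (simp add: nf_coords_append)
  moreover have "?A \<subseteq> S_carrier k" by (auto simp: S_carrier_iff)
  moreover have "regular_on ?A ?L"
    by (rule regular_on_nf_words) simp_all
  moreover have "\<forall>w\<in>?L. w \<noteq> []"
    unfolding nf_words_def by auto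
  ultimately show ?thesis
    unfolding automatic_structure_def using finite sg_eval_nf_words by auto
qed

lemma prefix_automatic_sg_S_if_le_1:
  assumes "k \<le> 1" shows "prefix_automatic_sg (S_carrier k) (S_mult k)"
proof -
  let ?A = "{ab_class k [La], ab_class k [Lb]}"
    and ?L = "nf_words (ab_class k [La]) (ab_class k [Lb])"
  have AS: "automatic_structure (S_carrier k) (S_mult k) ?A ?L"
    using assms by (rule automatic_structure_nf_words)
  have pref_eq: "{pad \<alpha> \<beta> | \<alpha> \<beta>. \<alpha> \<in> ?L \<and> \<beta> \<in> Pref ?L \<and> \<beta> \<noteq> [] \<and> sg_eval (S_mult k) \<alpha> = sg_eval (S_mult k) \<beta>}
      = L_dollar (S_mult k) ?L []"
  proof -
    have "(\<beta> \<in> Pref ?L \<and> \<beta> \<noteq> [] \<and> P) \<longleftrightarrow> (\<beta> \<in> ?L \<and> P)" for \<beta> P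
      by (simp add: Pref_nf_words[symmetric])
    then show ?thesis unfolding L_dollar_def by (simp only: append_Nil2)
  qed
  have "regular_on (alphabet2 ?A) (L_dollar (S_mult k) ?L [])"
    using AS by (simp add: automatic_structure_def)
  then show ?thesis
    unfolding prefix_automatic_sg_def
    by (intro exI[of _ ?A] exI[of _ ?L] conjI AS) (simp only: pref_eq)
qed

lemma automatic_sg_S_imp_le_1:
  assumes "automatic_sg (S_carrier k) (S_mult k)" shows "k \<le> 1"
proof (cases "k = 0")
  case False
  from assms obtain A L where AS: "automatic_structure (S_carrier k) (S_mult k) A L"
    unfolding automatic_sg_def by blast
  then have "A \<subseteq> S_carrier k" by (simp add: automatic_structure_def)
  then have reps: "\<forall>g\<in>A. \<exists>w. w \<noteq> [] \<and> g = ab_class k w"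
    using S_carrier_iff by blast
  obtain rep where rep: "\<forall>g\<in>A. rep g \<noteq> [] \<and> g = ab_class k (rep g)"
    using bchoice[OF reps] by (rule exE)
  from False have "1 \<le> k" by simp
  with AS rep have "S_automatic k A L rep" by (simp add: S_automatic_def)
  then show ?thesis by (rule S_automatic.le_1)
qed simp

theorem theorem3p1p9:
  fixes k :: nat
  shows "prefix_automatic_sg (S_carrier k) (S_mult k) \<longleftrightarrow> k \<le> 1"
proof
  assume "prefix_automatic_sg (S_carrier k) (S_mult k)"
  then have "automatic_sg (S_carrier k) (S_mult k)"
    unfolding prefix_automatic_sg_def automatic_sg_def by blast
  then show "k \<le> 1" by (rule automatic_sg_S_imp_le_1)
qed (rule prefix_automatic_sg_S_if_le_1)

end
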